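(* Assume the setting (S) below. If $V$ and $V'$ are proper $T$-submodules of $M$, then $V+V'$ is a proper $T$-submodule of $M$.
   Context: Setting (S): $\mathbb{F}$ is a field, $d\ge0$, and $(\{\theta_i\}_{i=0}^d;\{\theta^*_i\}_{i=0}^d;\{\zeta_i\}_{i=0}^d)$ are scalars in $\mathbb{F}$ satisfying: (C1) $\theta_i\ne\theta_j$, $\theta^*_i\ne\theta^*_j$ for $i\ne j$; (C2) $\zeta_0=1$, $\zeta_d\ne0$, $\sum_{i=0}^d\eta_{d-i}(\theta_0)\eta^*_{d-i}(\theta^*_0)\zeta_i\ne0$, where $\eta_i(\lambda)=\prod_{j=0}^{i-1}(\lambda-\theta_{d-j})$, $\eta^*_i(\lambda)=\prod_{j=0}^{i-1}(\lambda-\theta^*_{d-j})$; (C3) $\frac{\theta_{i-2}-\theta_{i+1}}{\theta_{i-1}-\theta_i}$ and $\frac{\theta^*_{i-2}-\theta^*_{i+1}}{\theta^*_{i-1}-\theta^*_i}$ are equal and independent of $i$ for $2\le i\le d-1$. Let $\tau_i(\lambda)=\prod_{j=0}^{i-1}(\lambda-\theta_j)$. For any such data satisfying (C1),(C3), $T$ denotes the associative $\mathbb{F}$-algebra with $1$ generated by $a,e_0,\dots,e_d,a^*,e^*_0,\dots,e^*_d$ with relations $e_ie_j=\delta_{ij}e_i$, $e^*_ie^*_j=\delta_{ij}e^*_i$, $\sum_ie_i=\sum_ie^*_i=1$, $a=\sum_i\theta_ie_i$, $a^*=\sum_i\theta^*_ie^*_i$, $e^*_ia^ke^*_j=0$ and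 $e_i{a^*}^ke_j=0$ whenever $0\le i,j,k\le d$, $k<|i-j|$; $e^*_0Te^*_0$ is a commutative $\mathbb{F}$-algebra with identity $e^*_0$, and $\mu:\mathbb{F}[x_1,\dots,x_d]\to e^*_0Te^*_0$ is the surjective algebra homomorphism $x_i\mapsto e^*_0\tau_i(a)e^*_0$. It is assumed (the $\mu$-conjecture) that for every $d'\ge0$ and every data $\{\theta_i\},\{\theta^*_i\}$ of length $d'+1$ satisfying (C1),(C3), the corresponding $\mu$ is an isomorphism. For $1\le i\le d$ put $g_i=e^*_0\tau_i(a)e^*_0-\zeta_ie^*_0/((\theta^*_0-\theta^*_1)\cdots(\theta^*_0-\theta^*_i))$, $J=T(1-e^*_0)+\sum_{i=1}^dTg_i$, and $M=T/J$ as a left $T$-module. *)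

theory Defs
  imports Main "HOL-Library.Poly_Mapping"
begin

datatype gen = Ga | Ge nat | Gastar | Gestar nat

type_synonym 'k fa = "gen list \<Rightarrow> 'k"

definition allowed :: "nat \<Rightarrow> gen \<Rightarrow> bool" where
  "allowed d x = (case x of Ge i \<Rightarrow> i \<le> d | Gestar i \<Rightarrow> i \<le> d | _ \<Rightarrow> True)"

text \<open>Carrier: finitely supported functions on words in the generators
 a, e_0..e_d, a*, e*_0..e*_d.\<close>
definition FA :: "nat \<Rightarrow> ('k::field) fa set" where
  "FA d = {f. finite {w. f w \<noteq> 0} \<and> (\<forall>w. f w \<noteq> 0 \<longrightarrow> (\<forall>x\<in>set w. allowed d x))}"

definition fa_zero :: "('k::field) fa" where "fa_zero = (\<lambda>w. 0)"
definition fa_one :: "('k::field) fa" where "fa_one = (\<lambda>w. if w = [] then 1 else 0)"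
definition fa_gen :: "gen \<Rightarrow> ('k::field) fa" where "fa_gen x = (\<lambda>w. if w = [x] then 1 else 0)"
definition fa_add :: "('k::field) fa \<Rightarrow> 'k fa \<Rightarrow> 'k fa" where "fa_add f g = (\<lambda>w. f w + g w)"
definition fa_sub :: "('k::field) fa \<Rightarrow> 'k fa \<Rightarrow> 'k fa" where "fa_sub f g = (\<lambda>w. f w - g w)"
definition fa_smul :: "'k::field \<Rightarrow> 'k fa \<Rightarrow> 'k fa" where "fa_smul c f = (\<lambda>w. c * f w)"
definition fa_mult :: "('k::field) fa \<Rightarrow> 'k fa \<Rightarrow> 'k fa" where
  "fa_mult f g = (\<lambda>w. \<Sum>i\<le>length w. f (take i w) * g (drop i w))"
definition fa_sum :: "('i \<Rightarrow> ('k::field) fa) \<Rightarrow> 'i set \<Rightarrow> 'k fa" where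
  "fa_sum F A = (\<lambda>w. \<Sum>i\<in>A. F i w)"
definition fa_prodl :: "('k::field) fa list \<Rightarrow> 'k fa" where
  "fa_prodl xs = foldr fa_mult xs fa_one"
definition fa_pow :: "('k::field) fa \<Rightarrow> nat \<Rightarrow> 'k fa" where
  "fa_pow f k = fa_prodl (replicate k f)"

abbreviation (input) gE :: "nat \<Rightarrow> ('k::field) fa" where "gE i \<equiv> fa_gen (Ge i)"
abbreviation (input) gEs :: "nat \<Rightarrow> ('k::field) fa" where "gEs i \<equiv> fa_gen (Gestar i)"
abbreviation (input) gA :: "('k::field) fa" where "gA \<equiv> fa_gen Ga"
abbreviation (input) gAs :: "('k::field) fa" where "gAs \<equiv> fa_gen Gastar"

definition T_rels :: "nat \<Rightarrow> (nat \<Rightarrow> 'k::field) \<Rightarrow> (nat \<Rightarrow> 'k) \<Rightarrow> 'k fa set" where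
  "T_rels d th ths =
     {fa_sub (fa_mult (gE i) (gE j)) (if i = j then gE i else fa_zero) | i j. i \<le> d \<and> j \<le> d}
   \<union> {fa_sub (fa_mult (gEs i) (gEs j)) (if i = j then gEs i else fa_zero) | i j. i \<le> d \<and> j \<le> d}
   \<union> {fa_sub (fa_sum gE {0..d}) fa_one, fa_sub (fa_sum gEs {0..d}) fa_one}
   \<union> {fa_sub gA (fa_sum (\<lambda>i. fa_smul (th i) (gE i)) {0..d}),
      fa_sub gAs (fa_sum (\<lambda>i. fa_smul (ths i) (gEs i)) {0..d})}
   \<union> {fa_mult (fa_mult (gEs i) (fa_pow gA k)) (gEs j) | i j k.
        i \<le> d \<and> j \<le> d \<and> k \<le> d \<and> (k + i < j \<or> k + j < i)}
   \<union> {fa_mult (fa_mult (gE i) (fa_pow gAs k)) (gE j) | i j k.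
        i \<le> d \<and> j \<le> d \<and> k \<le> d \<and> (k + i < j \<or> k + j < i)}"

inductive_set fa_ideal :: "('k::field) fa set \<Rightarrow> 'k fa set \<Rightarrow> 'k fa set"
  for C :: "'k fa set" and R :: "'k fa set" where
  rel: "r \<in> R \<Longrightarrow> r \<in> fa_ideal C R"
| zero: "fa_zero \<in> fa_ideal C R"
| add: "x \<in> fa_ideal C R \<Longrightarrow> y \<in> fa_ideal C R \<Longrightarrow> fa_add x y \<in> fa_ideal C R"
| mult: "x \<in> fa_ideal C R \<Longrightarrow> u \<in> C \<Longrightarrow> v \<in> C \<Longrightarrow> fa_mult (fa_mult u x) v \<in> fa_ideal C R"

definition T_ideal :: "nat \<Rightarrow> (nat \<Rightarrow> 'k::field) \<Rightarrow> (nat \<Rightarrow> 'k) \<Rightarrow> 'k fa set" where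
  "T_ideal d th ths = fa_ideal (FA d) (T_rels d th ths)"

section \<open>The algebra T = FA / I (elements are cosets)\<close>

definition qcls :: "('k::field) fa set \<Rightarrow> 'k fa set \<Rightarrow> 'k fa \<Rightarrow> 'k fa set" where
  "qcls C I x = {y \<in> C. fa_sub y x \<in> I}"
definition qcar :: "('k::field) fa set \<Rightarrow> 'k fa set \<Rightarrow> 'k fa set set" where
  "qcar C I = qcls C I ` C"
definition qrep :: "'a set \<Rightarrow> 'a" where "qrep X = (SOME x. x \<in> X)"
definition qadd :: "('k::field) fa set \<Rightarrow> 'k fa set \<Rightarrow> 'k fa set \<Rightarrow> 'k fa set \<Rightarrow> 'k fa set" where
  "qadd C I X Y = qcls C I (fa_add (qrep X) (qrep Y))"
definition qsub :: "('k::field) fa set \<Rightarrow> 'k fa set \<Rightarrow> 'k fa set \<Rightarrow> 'k fa set \<Rightarrow> 'k fa set" where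
  "qsub C I X Y = qcls C I (fa_sub (qrep X) (qrep Y))"
definition qmul :: "('k::field) fa set \<Rightarrow> 'k fa set \<Rightarrow> 'k fa set \<Rightarrow> 'k fa set \<Rightarrow> 'k fa set" where
  "qmul C I X Y = qcls C I (fa_mult (qrep X) (qrep Y))"
definition qzero :: "('k::field) fa set \<Rightarrow> 'k fa set \<Rightarrow> 'k fa set" where
  "qzero C I = qcls C I fa_zero"

inductive_set T_lideal :: "('k::field) fa set \<Rightarrow> 'k fa set \<Rightarrow> 'k fa set set \<Rightarrow> 'k fa set set"
  for C :: "'k fa set" and I :: "'k fa set" and G :: "'k fa set set" where
  gen: "g \<in> G \<Longrightarrow> g \<in> T_lideal C I G"
| zero: "qzero C I \<in> T_lideal C I G"
| add: "x \<in> T_lideal C I G \<Longrightarrow> y \<in> T_lideal C I G \<Longrightarrow> qadd C I x y \<in> T_lideal C I G"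
| lmult: "x \<in> T_lideal C I G \<Longrightarrow> t \<in> qcar C I \<Longrightarrow> qmul C I t x \<in> T_lideal C I G"

section \<open>The module M = T / J (elements are cosets of T-elements)\<close>

definition mcls :: "('k::field) fa set \<Rightarrow> 'k fa set \<Rightarrow> 'k fa set set \<Rightarrow> 'k fa set \<Rightarrow> 'k fa set set" where
  "mcls C I J X = {Y \<in> qcar C I. qsub C I Y X \<in> J}"
definition mcar :: "('k::field) fa set \<Rightarrow> 'k fa set \<Rightarrow> 'k fa set set \<Rightarrow> 'k fa set set set" where
  "mcar C I J = mcls C I J ` qcar C I"
definition madd :: "('k::field) fa set \<Rightarrow> 'k fa set \<Rightarrow> 'k fa set set \<Rightarrow> 'k fa set set \<Rightarrow> 'k fa set set \<Rightarrow> 'k fa set set" where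
  "madd C I J V W = mcls C I J (qadd C I (qrep V) (qrep W))"
definition mact :: "('k::field) fa set \<Rightarrow> 'k fa set \<Rightarrow> 'k fa set set \<Rightarrow> 'k fa set \<Rightarrow> 'k fa set set \<Rightarrow> 'k fa set set" where
  "mact C I J t V = mcls C I J (qmul C I t (qrep V))"
definition mzero :: "('k::field) fa set \<Rightarrow> 'k fa set \<Rightarrow> 'k fa set set \<Rightarrow> 'k fa set set" where
  "mzero C I J = mcls C I J (qzero C I)"

definition is_submodule :: "('k::field) fa set \<Rightarrow> 'k fa set \<Rightarrow> 'k fa set set \<Rightarrow> 'k fa set set set \<Rightarrow> bool" where
  "is_submodule C I J V \<longleftrightarrow> V \<subseteq> mcar C I J \<and> mzero C I J \<in> V
     \<and> (\<forall>v\<in>V. \<forall>w\<in>V. madd C I J v w \<in> V)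
     \<and> (\<forall>t\<in>qcar C I. \<forall>v\<in>V. mact C I J t v \<in> V)"

definition msum :: "('k::field) fa set \<Rightarrow> 'k fa set \<Rightarrow> 'k fa set set \<Rightarrow> 'k fa set set set \<Rightarrow> 'k fa set set set \<Rightarrow> 'k fa set set set" where
  "msum C I J V W = {madd C I J v w | v w. v \<in> V \<and> w \<in> W}"

definition tau_a :: "(nat \<Rightarrow> 'k::field) \<Rightarrow> nat \<Rightarrow> 'k fa" where
  "tau_a th i = fa_prodl (map (\<lambda>j. fa_sub gA (fa_smul (th j) fa_one)) [0..<i])"

definition xgen :: "(nat \<Rightarrow> 'k::field) \<Rightarrow> nat \<Rightarrow> 'k fa" where
  "xgen th i = fa_mult (fa_mult (gEs 0) (tau_a th i)) (gEs 0)"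

definition g_el :: "(nat \<Rightarrow> 'k::field) \<Rightarrow> (nat \<Rightarrow> 'k) \<Rightarrow> (nat \<Rightarrow> 'k) \<Rightarrow> nat \<Rightarrow> 'k fa" where
  "g_el th ths ze i = fa_sub (xgen th i)
      (fa_smul (ze i / (\<Prod>j\<in>{1..i}. ths 0 - ths j)) (gEs 0))"

definition J_set :: "nat \<Rightarrow> (nat \<Rightarrow> 'k::field) \<Rightarrow> (nat \<Rightarrow> 'k) \<Rightarrow> (nat \<Rightarrow> 'k) \<Rightarrow> 'k fa set set" where
  "J_set d th ths ze = T_lideal (FA d) (T_ideal d th ths)
     (insert (qcls (FA d) (T_ideal d th ths) (fa_sub fa_one (gEs 0)))
        {qcls (FA d) (T_ideal d th ths) (g_el th ths ze i) | i. 1 \<le> i \<and> i \<le> d})"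

abbreviation (input) M_car where
  "M_car d th ths ze \<equiv> mcar (FA d) (T_ideal d th ths) (J_set d th ths ze)"

text \<open>Polynomials in commuting variables x_1..x_d: poly_mappings from monomials
 (exponent vectors nat =>0 nat) to coefficients, with only variables 1..d occurring.\<close>
definition poly_in_vars :: "nat \<Rightarrow> ((nat \<Rightarrow>\<^sub>0 nat) \<Rightarrow>\<^sub>0 'k::zero) \<Rightarrow> bool" where
  "poly_in_vars d p \<longleftrightarrow> (\<forall>m\<in>Poly_Mapping.keys p. \<forall>j. Poly_Mapping.lookup m j \<noteq> 0 \<longrightarrow> 1 \<le> j \<and> j \<le> d)"

text \<open>Image of a monomial; the empty product is the identity e*_0 of e*_0 T e*_0.\<close>
definition mu_mono :: "nat \<Rightarrow> (nat \<Rightarrow> 'k::field) \<Rightarrow> (nat \<Rightarrow>\<^sub>0 nat) \<Rightarrow> 'k fa" where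
  "mu_mono d th m = fa_mult (gEs 0) (fa_prodl (map (\<lambda>i. fa_pow (xgen th i) (Poly_Mapping.lookup m i)) [1..<d+1]))"

definition mu :: "nat \<Rightarrow> (nat \<Rightarrow> 'k::field) \<Rightarrow> ((nat \<Rightarrow>\<^sub>0 nat) \<Rightarrow>\<^sub>0 'k) \<Rightarrow> 'k fa" where
  "mu d th p = fa_sum (\<lambda>m. fa_smul (Poly_Mapping.lookup p m) (mu_mono d th m)) (Poly_Mapping.keys p)"

text \<open>mu is an isomorphism onto e*_0 T e*_0 (computed modulo the ideal of relations).\<close>
definition mu_iso :: "nat \<Rightarrow> (nat \<Rightarrow> 'k::field) \<Rightarrow> (nat \<Rightarrow> 'k) \<Rightarrow> bool" where
  "mu_iso d th ths \<longleftrightarrow>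
     (\<forall>p. poly_in_vars d p \<and> mu d th p \<in> T_ideal d th ths \<longrightarrow> p = 0)
   \<and> (\<forall>x\<in>FA d. \<exists>p. poly_in_vars d p \<and>
        fa_sub (fa_mult (fa_mult (gEs 0) x) (gEs 0)) (mu d th p) \<in> T_ideal d th ths)"

definition cond_C1 :: "nat \<Rightarrow> (nat \<Rightarrow> 'k::field) \<Rightarrow> (nat \<Rightarrow> 'k) \<Rightarrow> bool" where
  "cond_C1 d th ths \<longleftrightarrow> (\<forall>i\<le>d. \<forall>j\<le>d. i \<noteq> j \<longrightarrow> th i \<noteq> th j \<and> ths i \<noteq> ths j)"

definition cond_C3 :: "nat \<Rightarrow> (nat \<Rightarrow> 'k::field) \<Rightarrow> (nat \<Rightarrow> 'k) \<Rightarrow> bool" where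
  "cond_C3 d th ths \<longleftrightarrow> (\<exists>\<beta>. \<forall>i. 2 \<le> i \<and> i + 1 \<le> d \<longrightarrow>
      (th (i-2) - th (i+1)) / (th (i-1) - th i) = \<beta> \<and>
      (ths (i-2) - ths (i+1)) / (ths (i-1) - ths i) = \<beta>)"

definition eta :: "nat \<Rightarrow> (nat \<Rightarrow> 'k::field) \<Rightarrow> nat \<Rightarrow> 'k \<Rightarrow> 'k" where
  "eta d th i lam = (\<Prod>j<i. lam - th (d - j))"

definition cond_C2 :: "nat \<Rightarrow> (nat \<Rightarrow> 'k::field) \<Rightarrow> (nat \<Rightarrow> 'k) \<Rightarrow> (nat \<Rightarrow> 'k) \<Rightarrow> bool" where
  "cond_C2 d th ths ze \<longleftrightarrow> ze 0 = 1 \<and> ze d \<noteq> 0 \<and>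
     (\<Sum>i=0..d. eta d th (d - i) (th 0) * eta d ths (d - i) (ths 0) * ze i) \<noteq> 0"

end

theory Submission imports Defs begin

text \<open>Modulo J every element of e*_0 T is a scalar multiple of 1: by surjectivity of mu,
  e*_0 t e*_0 is a polynomial in the x_i; since g_i lies in J, each x_i acts on e*_0 + J as the
  scalar zeta_i / ((theta*_0 - theta*_1) ... (theta*_0 - theta*_i)); and 1 - e*_0 lies in J.
  A proper submodule cannot contain a nonzero scalar multiple of the generator 1 + J of M, so
  e*_0 annihilates every proper submodule. If V + V' = M, write 1 + J = v + v'; multiplying by
  e*_0 gives e*_0 + J = 0, hence 1 + J = 0 and M = 0, contradicting properness of V.\<close>

lemma sum_triangle_swap:
  "(\<Sum>i\<le>n. \<Sum>j\<le>i. (a::nat\<Rightarrow>nat\<Rightarrow>'a::comm_monoid_add) i j) = (\<Sum>j\<le>n. \<Sum>i=j..n. a i j)"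
proof (induction n)
  case 0 then show ?case by simp
next
  case (Suc n)
  have "(\<Sum>j\<le>Suc n. \<Sum>i=j..Suc n. a i j) = (\<Sum>j\<le>n. \<Sum>i=j..Suc n. a i j) + a (Suc n) (Suc n)"
    by simp
  also have "(\<Sum>j\<le>n. \<Sum>i=j..Suc n. a i j) = (\<Sum>j\<le>n. (\<Sum>i=j..n. a i j) + a (Suc n) j)"
    by (intro sum.cong refl) (simp add: atLeastAtMostSuc_conv add.commute)
  finally show ?case using Suc by (simp add: sum.distrib add.assoc)
qed

lemma fa_mult_assoc: "fa_mult (fa_mult f g) h = fa_mult f (fa_mult g (h::'k::field fa))"
proof (rule ext)
  fix w :: "gen list"
  let ?t = "\<lambda>i j. f (take j w) * g (take (i-j) (drop j w)) * h (drop i w)"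
  have left: "fa_mult (fa_mult f g) h w = (\<Sum>i\<le>length w. \<Sum>j\<le>i. ?t i j)"
    unfolding fa_mult_def by (auto simp: sum_distrib_right min_def take_drop intro!: sum.cong)
  have inner: "(\<Sum>k\<le>length w - j. g (take k (drop j w)) * h (drop (k + j) w))
      = (\<Sum>i=j..length w. g (take (i-j) (drop j w)) * h (drop i w))" if j: "j \<le> length w" for j
  proof -
    have "{j..length w} = (\<lambda>k. k + j) ` {..length w - j}"
      using j by (simp add: atMost_atLeast0 image_add_atLeastAtMost)
    then show ?thesis by (simp add: sum.reindex inj_on_def)
  qed
  have right: "fa_mult f (fa_mult g h) w = (\<Sum>j\<le>length w. \<Sum>i=j..length w. ?t i j)"
    unfolding fa_mult_def
    by (intro sum.cong refl) (simp add: inner sum_distrib_left[symmetric] mult.assoc)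
  show "fa_mult (fa_mult f g) h w = fa_mult f (fa_mult g h) w"
    unfolding left right by (rule sum_triangle_swap)
qed

lemma fa_mult_one_left[simp]: "fa_mult fa_one f = (f::'k::field fa)"
proof (rule ext)
  fix w :: "gen list"
  have "fa_mult fa_one f w = (\<Sum>i\<in>{0}. fa_one (take i w) * f (drop i w))"
    unfolding fa_mult_def by (rule sum.mono_neutral_right) (auto simp: fa_one_def)
  then show "fa_mult fa_one f w = f w" by (simp add: fa_one_def)
qed

lemma fa_mult_one_right[simp]: "fa_mult f fa_one = (f::'k::field fa)"
proof (rule ext)
  fix w :: "gen list"
  have "fa_mult f fa_one w = (\<Sum>i\<in>{length w}. f (take i w) * fa_one (drop i w))"
    unfolding fa_mult_def by (rule sum.mono_neutral_right) (auto simp: fa_one_def)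
  then show "fa_mult f fa_one w = f w" by (simp add: fa_one_def)
qed

lemma fa_mult_add_left: "fa_mult (fa_add f g) h = fa_add (fa_mult f h) (fa_mult g (h::'k::field fa))"
  by (auto simp: fun_eq_iff fa_mult_def fa_add_def sum.distrib ring_distribs)
lemma fa_mult_add_right: "fa_mult h (fa_add f g) = fa_add (fa_mult h f) (fa_mult h (g::'k::field fa))"
  by (auto simp: fun_eq_iff fa_mult_def fa_add_def sum.distrib ring_distribs)
lemma fa_mult_sub_left: "fa_mult (fa_sub f g) h = fa_sub (fa_mult f h) (fa_mult g (h::'k::field fa))"
  by (auto simp: fun_eq_iff fa_mult_def fa_sub_def sum_subtractf ring_distribs)
lemma fa_mult_sub_right: "fa_mult h (fa_sub f g) = fa_sub (fa_mult h f) (fa_mult h (g::'k::field fa))"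
  by (auto simp: fun_eq_iff fa_mult_def fa_sub_def sum_subtractf ring_distribs)
lemma fa_mult_smul_left: "fa_mult (fa_smul c f) h = fa_smul c (fa_mult f (h::'k::field fa))"
  by (auto simp: fun_eq_iff fa_mult_def fa_smul_def sum_distrib_left mult.assoc)
lemma fa_mult_smul_right: "fa_mult h (fa_smul c f) = fa_smul c (fa_mult h (f::'k::field fa))"
  by (auto simp: fun_eq_iff fa_mult_def fa_smul_def sum_distrib_left mult.left_commute)
lemma fa_mult_zero_left: "fa_mult fa_zero h = (fa_zero::'k::field fa)"
  by (auto simp: fun_eq_iff fa_mult_def fa_zero_def)
lemma fa_mult_zero_right: "fa_mult h fa_zero = (fa_zero::'k::field fa)"
  by (auto simp: fun_eq_iff fa_mult_def fa_zero_def)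

lemmas fa_ring_simps = fa_mult_assoc fa_mult_add_left fa_mult_add_right fa_mult_sub_left
  fa_mult_sub_right fa_mult_smul_left fa_mult_smul_right fa_mult_zero_left fa_mult_zero_right
  fa_mult_one_left fa_mult_one_right
lemmas fa_pointwise_defs = fa_add_def fa_sub_def fa_smul_def fa_zero_def

lemma fa_pow_0: "fa_pow x 0 = (fa_one::'k::field fa)"
  by (simp add: fa_pow_def fa_prodl_def)
lemma fa_pow_Suc: "fa_pow x (Suc n) = fa_mult x (fa_pow (x::'k::field fa) n)"
  by (simp add: fa_pow_def fa_prodl_def)

lemma FA_I:
  "finite {w. f w \<noteq> 0} \<Longrightarrow> (\<And>w x. f w \<noteq> 0 \<Longrightarrow> x \<in> set w \<Longrightarrow> allowed d x) \<Longrightarrow> f \<in> FA d"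
  by (auto simp: FA_def)
lemma FA_finite_support: "f \<in> FA d \<Longrightarrow> finite {w. f w \<noteq> 0}"
  by (auto simp: FA_def)
lemma FA_allowed: "f \<in> FA d \<Longrightarrow> f w \<noteq> 0 \<Longrightarrow> x \<in> set w \<Longrightarrow> allowed d x"
  by (auto simp: FA_def)

lemma FA_zero[simp]: "(fa_zero::'k::field fa) \<in> FA d"
  by (rule FA_I) (auto simp: fa_zero_def)
lemma FA_one[simp]: "(fa_one::'k::field fa) \<in> FA d"
  by (rule FA_I) (auto simp: fa_one_def split: if_splits)
lemma FA_gen: "allowed d x \<Longrightarrow> (fa_gen x::'k::field fa) \<in> FA d"
  by (rule FA_I) (auto simp: fa_gen_def split: if_splits)

lemma FA_add[simp]: "f \<in> FA d \<Longrightarrow> g \<in> FA d \<Longrightarrow> fa_add f (g::'k::field fa) \<in> FA d"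
  by (rule FA_I, rule finite_subset[of _ "{w. f w \<noteq> 0} \<union> {w. g w \<noteq> 0}"])
    (auto simp: fa_add_def FA_finite_support, metis FA_allowed add.right_neutral add_0)
lemma FA_sub[simp]: "f \<in> FA d \<Longrightarrow> g \<in> FA d \<Longrightarrow> fa_sub f (g::'k::field fa) \<in> FA d"
  by (rule FA_I, rule finite_subset[of _ "{w. f w \<noteq> 0} \<union> {w. g w \<noteq> 0}"])
    (auto simp: fa_sub_def FA_finite_support, metis FA_allowed diff_zero diff_self)
lemma FA_smul[simp]: "f \<in> FA d \<Longrightarrow> fa_smul c (f::'k::field fa) \<in> FA d"
  by (rule FA_I, rule finite_subset[of _ "{w. f w \<noteq> 0}"])
    (auto simp: fa_smul_def FA_finite_support, metis FA_allowed)

lemma FA_mult[simp]: "f \<in> FA d \<Longrightarrow> g \<in> FA d \<Longrightarrow> fa_mult f (g::'k::field fa) \<in> FA d"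
proof (rule FA_I)
  assume f: "f \<in> FA d" and g: "g \<in> FA d"
  have split: "\<exists>i. f (take i w) \<noteq> 0 \<and> g (drop i w) \<noteq> 0" if "fa_mult f g w \<noteq> 0" for w
    using that unfolding fa_mult_def by (metis (no_types, lifting) mult_not_zero sum.neutral)
  have "{w. fa_mult f g w \<noteq> 0} \<subseteq> (\<lambda>(u,v). u @ v) ` ({w. f w \<noteq> 0} \<times> {w. g w \<noteq> 0})"
  proof
    fix w assume "w \<in> {w. fa_mult f g w \<noteq> 0}"
    then obtain i where "f (take i w) \<noteq> 0" "g (drop i w) \<noteq> 0" using split by blast
    then show "w \<in> (\<lambda>(u,v). u @ v) ` ({w. f w \<noteq> 0} \<times> {w. g w \<noteq> 0})"
      by (intro image_eqI[of _ _ "(take i w, drop i w)"]) auto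
  qed
  then show "finite {w. fa_mult f g w \<noteq> 0}"
    by (rule finite_subset) (use f g in \<open>auto simp: FA_finite_support\<close>)
  fix w x assume "fa_mult f g w \<noteq> 0" "x \<in> set w"
  then obtain i where i: "f (take i w) \<noteq> 0" "g (drop i w) \<noteq> 0" using split by blast
  have "x \<in> set (take i w) \<or> x \<in> set (drop i w)"
    using \<open>x \<in> set w\<close> by (metis Un_iff append_take_drop_id set_append)
  then show "allowed d x" using i f g FA_allowed by metis
qed

lemma FA_prodl: "(\<And>x. x \<in> set xs \<Longrightarrow> x \<in> FA d) \<Longrightarrow> fa_prodl (xs::'k::field fa list) \<in> FA d"
  by (induction xs) (auto simp: fa_prodl_def)
lemma FA_pow: "x \<in> FA d \<Longrightarrow> fa_pow (x::'k::field fa) n \<in> FA d"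
  unfolding fa_pow_def by (rule FA_prodl) auto

lemma FA_gEs[simp]: "i \<le> d \<Longrightarrow> (gEs i::'k::field fa) \<in> FA d"
  by (rule FA_gen) (simp add: allowed_def)
lemma FA_gA[simp]: "(gA::'k::field fa) \<in> FA d"
  by (rule FA_gen) (simp add: allowed_def)
lemma FA_tau_a[simp]: "(tau_a th i::'k::field fa) \<in> FA d"
  unfolding tau_a_def by (rule FA_prodl) auto
lemma FA_xgen[simp]: "(xgen th i::'k::field fa) \<in> FA d"
  unfolding xgen_def by simp
lemma FA_g_el[simp]: "(g_el th ths ze i::'k::field fa) \<in> FA d"
  unfolding g_el_def by simp

section \<open>Quotients of the free algebra and their modules\<close>

locale fa_quotient =
  fixes d :: nat and R :: "'k::field fa set" and G :: "'k fa set set"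
begin

abbreviation "C \<equiv> FA d"
abbreviation "I \<equiv> fa_ideal (FA d) R"
abbreviation "J \<equiv> T_lideal C I G"
abbreviation "qc \<equiv> qcls C I"
abbreviation "mc x \<equiv> mcls C I J (qc x)"

lemma ideal_lmult: "x \<in> I \<Longrightarrow> u \<in> C \<Longrightarrow> fa_mult u x \<in> I"
  using fa_ideal.mult[of x C R u fa_one] by simp
lemma ideal_rmult: "x \<in> I \<Longrightarrow> u \<in> C \<Longrightarrow> fa_mult x u \<in> I"
  using fa_ideal.mult[of x C R fa_one u] by simp
lemma ideal_smul: "x \<in> I \<Longrightarrow> fa_smul c x \<in> I"
  using ideal_lmult[of x "fa_smul c fa_one"] by (simp add: fa_ring_simps)
lemma ideal_sub: "x \<in> I \<Longrightarrow> y \<in> I \<Longrightarrow> fa_sub x y \<in> I"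
  using fa_ideal.add[OF _ ideal_smul[of y "-1"], of x]
  by (simp add: fun_eq_iff fa_pointwise_defs)

lemma qcls_self: "x \<in> C \<Longrightarrow> x \<in> qc x"
  unfolding qcls_def using fa_ideal.zero by (simp add: fa_sub_def fa_zero_def)

lemma qcls_eqI: "x \<in> C \<Longrightarrow> y \<in> C \<Longrightarrow> fa_sub x y \<in> I \<Longrightarrow> qc x = qc y"
proof -
  assume xy: "fa_sub x y \<in> I"
  have "fa_sub z y = fa_add (fa_sub z x) (fa_sub x y)" "fa_sub z x = fa_sub (fa_sub z y) (fa_sub x y)"
    for z :: "'k fa" by (simp_all add: fun_eq_iff fa_pointwise_defs)
  then show ?thesis
    unfolding qcls_def using xy fa_ideal.add ideal_sub by metis
qed

lemma qrep_qcls: "x \<in> C \<Longrightarrow> qrep (qc x) \<in> C \<and> fa_sub (qrep (qc x)) x \<in> I"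
  using qcls_self someI[of "\<lambda>y. y \<in> qc x" x] by (simp add: qrep_def qcls_def)

lemma qadd_qcls: "x \<in> C \<Longrightarrow> y \<in> C \<Longrightarrow> qadd C I (qc x) (qc y) = qc (fa_add x y)"
proof -
  assume x: "x \<in> C" and y: "y \<in> C"
  note rx = qrep_qcls[OF x] and ry = qrep_qcls[OF y]
  have "fa_add (fa_sub (qrep (qc x)) x) (fa_sub (qrep (qc y)) y) \<in> I"
    using rx ry fa_ideal.add by blast
  moreover have "fa_add (fa_sub (qrep (qc x)) x) (fa_sub (qrep (qc y)) y)
      = fa_sub (fa_add (qrep (qc x)) (qrep (qc y))) (fa_add x y)"
    by (simp add: fun_eq_iff fa_pointwise_defs algebra_simps)
  ultimately show ?thesis
    unfolding qadd_def using rx ry x y by (intro qcls_eqI) auto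
qed

lemma qsub_qcls: "x \<in> C \<Longrightarrow> y \<in> C \<Longrightarrow> qsub C I (qc x) (qc y) = qc (fa_sub x y)"
proof -
  assume x: "x \<in> C" and y: "y \<in> C"
  note rx = qrep_qcls[OF x] and ry = qrep_qcls[OF y]
  have "fa_sub (fa_sub (qrep (qc x)) x) (fa_sub (qrep (qc y)) y) \<in> I"
    using rx ry ideal_sub by blast
  moreover have "fa_sub (fa_sub (qrep (qc x)) x) (fa_sub (qrep (qc y)) y)
      = fa_sub (fa_sub (qrep (qc x)) (qrep (qc y))) (fa_sub x y)"
    by (simp add: fun_eq_iff fa_pointwise_defs algebra_simps)
  ultimately show ?thesis
    unfolding qsub_def using rx ry x y by (intro qcls_eqI) auto
qed

lemma qmul_qcls: "x \<in> C \<Longrightarrow> y \<in> C \<Longrightarrow> qmul C I (qc x) (qc y) = qc (fa_mult x y)"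
proof -
  assume x: "x \<in> C" and y: "y \<in> C"
  define x' where "x' = qrep (qc x)"
  define y' where "y' = qrep (qc y)"
  have h: "x' \<in> C" "y' \<in> C" "fa_sub x' x \<in> I" "fa_sub y' y \<in> I"
    using qrep_qcls[OF x] qrep_qcls[OF y] by (auto simp: x'_def y'_def)
  have "fa_add (fa_mult (fa_sub x' x) y') (fa_mult x (fa_sub y' y)) \<in> I"
    using h x by (intro fa_ideal.add ideal_lmult ideal_rmult)
  moreover have "fa_add (fa_mult (fa_sub x' x) y') (fa_mult x (fa_sub y' y))
      = fa_sub (fa_mult x' y') (fa_mult x y)"
    by (simp only: fa_ring_simps) (simp add: fun_eq_iff fa_pointwise_defs)
  ultimately show ?thesis
    unfolding qmul_def x'_def[symmetric] y'_def[symmetric] using h x y by (intro qcls_eqI) auto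
qed

lemma qcar_iff: "X \<in> qcar C I \<longleftrightarrow> (\<exists>x\<in>C. X = qc x)"
  by (auto simp: qcar_def)

definition in_J :: "'k fa \<Rightarrow> bool" where "in_J z \<longleftrightarrow> z \<in> C \<and> qc z \<in> J"

lemma in_J_add: "in_J a \<Longrightarrow> in_J b \<Longrightarrow> in_J (fa_add a b)"
  unfolding in_J_def using T_lideal.add qadd_qcls by fastforce
lemma in_J_lmult: "in_J a \<Longrightarrow> t \<in> C \<Longrightarrow> in_J (fa_mult t a)"
  unfolding in_J_def using T_lideal.lmult qmul_qcls by (metis FA_mult qcar_iff)
lemma in_J_smul: "in_J a \<Longrightarrow> in_J (fa_smul c a)"
  using in_J_lmult[of a "fa_smul c fa_one"] by (simp add: fa_ring_simps)
lemma in_J_sub: "in_J a \<Longrightarrow> in_J b \<Longrightarrow> in_J (fa_sub a b)"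
  using in_J_add[OF _ in_J_smul[of b "-1"], of a] by (simp add: fun_eq_iff fa_pointwise_defs)
lemma in_J_gen: "x \<in> C \<Longrightarrow> qc x \<in> G \<Longrightarrow> in_J x"
  unfolding in_J_def by (simp add: T_lideal.gen)
lemma in_J_FA: "in_J a \<Longrightarrow> a \<in> C"
  by (simp add: in_J_def)

lemma in_J_ideal: "a \<in> C \<Longrightarrow> a \<in> I \<Longrightarrow> in_J a"
proof -
  assume a: "a \<in> C" "a \<in> I"
  have "fa_sub a fa_zero = a" by (simp add: fun_eq_iff fa_pointwise_defs)
  then have "qc a = qc fa_zero" using a by (intro qcls_eqI) auto
  then show ?thesis unfolding in_J_def using T_lideal.zero[of C I G] a by (simp add: qzero_def)
qed

lemma in_J_zero: "in_J fa_zero"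
  by (rule in_J_ideal) (simp_all add: fa_ideal.zero)

lemma mcls_eq: "x \<in> C \<Longrightarrow> mc x = {qc y | y. y \<in> C \<and> in_J (fa_sub y x)}"
  unfolding mcls_def in_J_def using qsub_qcls by (auto simp: qcar_iff)

lemma mcls_eqI: "x \<in> C \<Longrightarrow> y \<in> C \<Longrightarrow> in_J (fa_sub x y) \<Longrightarrow> mc x = mc y"
proof -
  assume x: "x \<in> C" and y: "y \<in> C" and xy: "in_J (fa_sub x y)"
  have "fa_sub z y = fa_add (fa_sub z x) (fa_sub x y)" "fa_sub z x = fa_sub (fa_sub z y) (fa_sub x y)"
    for z :: "'k fa" by (simp_all add: fun_eq_iff fa_pointwise_defs)
  then have "in_J (fa_sub z y) \<longleftrightarrow> in_J (fa_sub z x)" for z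
    using xy in_J_add in_J_sub by metis
  then show ?thesis using x y by (simp add: mcls_eq)
qed

lemma qrep_mcls: "x \<in> C \<Longrightarrow> \<exists>y. y \<in> C \<and> in_J (fa_sub y x) \<and> qrep (mc x) = qc y"
proof -
  assume x: "x \<in> C"
  have "fa_sub x x = fa_zero" by (simp add: fun_eq_iff fa_pointwise_defs)
  then have "qc x \<in> mc x" using x in_J_zero by (auto simp: mcls_eq)
  then have "qrep (mc x) \<in> mc x" unfolding qrep_def by (rule someI)
  then show ?thesis using x by (auto simp: mcls_eq)
qed

lemma madd_mcls: "x \<in> C \<Longrightarrow> y \<in> C \<Longrightarrow> madd C I J (mc x) (mc y) = mc (fa_add x y)"
proof -
  assume x: "x \<in> C" and y: "y \<in> C"
  obtain x' where x': "x' \<in> C" "in_J (fa_sub x' x)" "qrep (mc x) = qc x'"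
    using qrep_mcls[OF x] by blast
  obtain y' where y': "y' \<in> C" "in_J (fa_sub y' y)" "qrep (mc y) = qc y'"
    using qrep_mcls[OF y] by blast
  have "fa_sub (fa_add x' y') (fa_add x y) = fa_add (fa_sub x' x) (fa_sub y' y)"
    by (simp add: fun_eq_iff fa_pointwise_defs)
  then have "mc (fa_add x' y') = mc (fa_add x y)"
    using x y x' y' in_J_add by (intro mcls_eqI) auto
  then show ?thesis
    unfolding madd_def x'(3) y'(3) using x' y' by (simp add: qadd_qcls)
qed

lemma mact_mcls: "t \<in> C \<Longrightarrow> x \<in> C \<Longrightarrow> mact C I J (qc t) (mc x) = mc (fa_mult t x)"
proof -
  assume t: "t \<in> C" and x: "x \<in> C"
  obtain x' where x': "x' \<in> C" "in_J (fa_sub x' x)" "qrep (mc x) = qc x'"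
    using qrep_mcls[OF x] by blast
  have "mc (fa_mult t x') = mc (fa_mult t x)"
    using x t x' in_J_lmult[OF x'(2) t] by (intro mcls_eqI) (auto simp: fa_ring_simps)
  then show ?thesis
    unfolding mact_def x'(3) using x' t by (simp add: qmul_qcls)
qed

lemma mzero_mcls: "mzero C I J = mc fa_zero"
  by (simp add: mzero_def qzero_def)

lemma mcar_iff: "X \<in> mcar C I J \<longleftrightarrow> (\<exists>x\<in>C. X = mc x)"
  by (auto simp: mcar_def qcar_def)

lemma submodule_mcls:
  assumes "is_submodule C I J V" "v \<in> V"
  obtains x where "x \<in> C" "v = mc x"
proof -
  have "v \<in> mcar C I J" using assms unfolding is_submodule_def by blast
  then show thesis using that by (auto simp: mcar_iff)
qed

lemma msum_mcls:
  assumes "is_submodule C I J V" "is_submodule C I J W" "u \<in> msum C I J V W"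
  obtains x y where "x \<in> C" "y \<in> C" "mc x \<in> V" "mc y \<in> W" "u = mc (fa_add x y)"
proof -
  obtain v w where "v \<in> V" "w \<in> W" "u = madd C I J v w"
    using assms(3) unfolding msum_def by blast
  moreover obtain x where "x \<in> C" "v = mc x" using assms(1) \<open>v \<in> V\<close> by (rule submodule_mcls)
  moreover obtain y where "y \<in> C" "w = mc y" using assms(2) \<open>w \<in> W\<close> by (rule submodule_mcls)
  ultimately show ?thesis by (intro that[of x y]) (auto simp: madd_mcls)
qed

lemma madd_mem_msum: "v \<in> V \<Longrightarrow> w \<in> W \<Longrightarrow> madd C I J v w \<in> msum C I J V W"
  unfolding msum_def by blast

lemma submodule_msum:
  assumes V: "is_submodule C I J V" and W: "is_submodule C I J W"
  shows "is_submodule C I J (msum C I J V W)"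
  unfolding is_submodule_def
proof (intro conjI ballI)
  show "msum C I J V W \<subseteq> mcar C I J"
  proof
    fix u assume "u \<in> msum C I J V W"
    then obtain x y where "x \<in> C" "y \<in> C" "u = mc (fa_add x y)"
      by (rule msum_mcls[OF V W])
    then show "u \<in> mcar C I J" by (auto simp: mcar_iff)
  qed
  have "madd C I J (mzero C I J) (mzero C I J) = mzero C I J"
    by (simp add: mzero_mcls madd_mcls) (simp add: fa_add_def fa_zero_def)
  then show "mzero C I J \<in> msum C I J V W"
    using madd_mem_msum V W unfolding is_submodule_def by metis
next
  fix u u' assume u: "u \<in> msum C I J V W" and u': "u' \<in> msum C I J V W"
  obtain x y where xy: "x \<in> C" "y \<in> C" "mc x \<in> V" "mc y \<in> W" "u = mc (fa_add x y)"
    using u by (rule msum_mcls[OF V W])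
  obtain x' y' where xy': "x' \<in> C" "y' \<in> C" "mc x' \<in> V" "mc y' \<in> W" "u' = mc (fa_add x' y')"
    using u' by (rule msum_mcls[OF V W])
  have "fa_add (fa_add x y) (fa_add x' y') = fa_add (fa_add x x') (fa_add y y')"
    by (simp add: fun_eq_iff fa_pointwise_defs algebra_simps)
  then have "madd C I J u u' = madd C I J (madd C I J (mc x) (mc x')) (madd C I J (mc y) (mc y'))"
    using xy xy' by (simp add: madd_mcls)
  moreover have "madd C I J (mc x) (mc x') \<in> V" "madd C I J (mc y) (mc y') \<in> W"
    using xy xy' V W unfolding is_submodule_def by blast+
  ultimately show "madd C I J u u' \<in> msum C I J V W"
    by (simp add: madd_mem_msum)
next
  fix t u assume t: "t \<in> qcar C I" and u: "u \<in> msum C I J V W"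
  obtain x y where xy: "x \<in> C" "y \<in> C" "mc x \<in> V" "mc y \<in> W" "u = mc (fa_add x y)"
    using u by (rule msum_mcls[OF V W])
  obtain s where s: "s \<in> C" "t = qc s" using t by (auto simp: qcar_iff)
  have "mact C I J t u = madd C I J (mact C I J t (mc x)) (mact C I J t (mc y))"
    using xy s by (simp add: madd_mcls mact_mcls fa_ring_simps)
  moreover have "mact C I J t (mc x) \<in> V" "mact C I J t (mc y) \<in> W"
    using xy t V W unfolding is_submodule_def by blast+
  ultimately show "mact C I J t u \<in> msum C I J V W"
    by (simp add: madd_mem_msum)
qed

lemma submodule_eq_mcar_if_one:
  assumes V: "is_submodule C I J V" and one: "mc fa_one \<in> V"
  shows "V = mcar C I J"
proof -
  have "mc t \<in> V" if t: "t \<in> C" for t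
  proof -
    have "qc t \<in> qcar C I" using t by (auto simp: qcar_iff)
    then have "mact C I J (qc t) (mc fa_one) \<in> V"
      using V one unfolding is_submodule_def by blast
    then show ?thesis using t by (simp add: mact_mcls)
  qed
  then show ?thesis using V unfolding is_submodule_def by (auto simp: mcar_iff)
qed

lemma submodule_eq_mcar_if_scalar:
  assumes V: "is_submodule C I J V" and c: "c \<noteq> 0" and cV: "mc (fa_smul c fa_one) \<in> V"
  shows "V = mcar C I J"
proof (rule submodule_eq_mcar_if_one[OF V])
  have "fa_mult (fa_smul (1/c) fa_one) (fa_smul c fa_one) = (fa_one :: 'k fa)"
    using c by (simp only: fa_ring_simps) (simp add: fun_eq_iff fa_pointwise_defs)
  then have "mact C I J (qc (fa_smul (1/c) fa_one)) (mc (fa_smul c fa_one)) = mc fa_one"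
    by (simp add: mact_mcls)
  moreover have "qc (fa_smul (1/c) fa_one) \<in> qcar C I"
    by (auto simp: qcar_iff)
  ultimately show "mc fa_one \<in> V"
    using V cV unfolding is_submodule_def by metis
qed

end

section \<open>The module M = T/J\<close>

definition J_gens :: "nat \<Rightarrow> (nat \<Rightarrow> 'k::field) \<Rightarrow> (nat \<Rightarrow> 'k) \<Rightarrow> (nat \<Rightarrow> 'k) \<Rightarrow> 'k fa set set" where
  "J_gens d th ths ze = insert (qcls (FA d) (T_ideal d th ths) (fa_sub fa_one (gEs 0)))
     {qcls (FA d) (T_ideal d th ths) (g_el th ths ze i) | i. 1 \<le> i \<and> i \<le> d}"

locale T_module = fa_quotient d "T_rels d th ths" "J_gens d th ths ze" for d th ths ze
begin

abbreviation "e \<equiv> (gEs 0 :: 'a fa)"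
abbreviation "x i \<equiv> xgen th i"

text \<open>The scalar by which x_i acts on e*_0 + J, read off from g_i.\<close>
definition x_eigenvalue :: "nat \<Rightarrow> 'a" where
  "x_eigenvalue i = ze i / (\<Prod>j\<in>{1..i}. ths 0 - ths j)"

lemma T_ideal_eq: "T_ideal d th ths = I"
  by (simp add: T_ideal_def)
lemma J_set_eq: "J_set d th ths ze = J"
  by (simp add: J_set_def J_gens_def T_ideal_def)

lemma in_J_g_el: "1 \<le> i \<Longrightarrow> i \<le> d \<Longrightarrow> in_J (g_el th ths ze i)"
  by (rule in_J_gen) (auto simp: J_gens_def T_ideal_def)
lemma in_J_one_minus_e: "in_J (fa_sub fa_one e)"
  by (rule in_J_gen) (auto simp: J_gens_def T_ideal_def)

lemma e_idem: "fa_sub (fa_mult e e) e \<in> I"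
  by (rule fa_ideal.rel) (auto simp: T_rels_def)

lemma e_mult_x: "fa_sub (fa_mult e (x i)) (x i) \<in> I"
proof -
  have "fa_mult (fa_sub (fa_mult e e) e) (fa_mult (tau_a th i) e) \<in> I"
    using e_idem by (intro ideal_rmult) auto
  then show ?thesis unfolding xgen_def by (simp only: fa_ring_simps)
qed

lemma x_mult_e: "fa_sub (fa_mult (x i) e) (x i) \<in> I"
proof -
  have "fa_mult (fa_mult e (tau_a th i)) (fa_sub (fa_mult e e) e) \<in> I"
    using e_idem by (intro ideal_lmult) auto
  then show ?thesis unfolding xgen_def by (simp only: fa_ring_simps)
qed

lemma e_mult_x_scalar:
  assumes W: "W \<in> C" and h: "in_J (fa_sub (fa_mult e W) (fa_smul c e))" and i: "1 \<le> i" "i \<le> d"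
  shows "in_J (fa_sub (fa_mult e (fa_mult (x i) W)) (fa_smul (c * x_eigenvalue i) e))"
proof -
  \<comment> \<open>e x_i W = x_i e W = c x_i e = c (g_i + x_eigenvalue i e) modulo J, since e x_i = x_i = x_i e in T\<close>
  have "in_J (fa_mult (fa_sub (fa_mult e (x i)) (x i)) W)"
    using W e_mult_x by (intro in_J_ideal ideal_rmult) auto
  moreover have "in_J (fa_smul (-1) (fa_mult (fa_sub (fa_mult (x i) e) (x i)) W))"
    using W x_mult_e by (intro in_J_smul in_J_ideal ideal_rmult) auto
  moreover have "in_J (fa_mult (x i) (fa_sub (fa_mult e W) (fa_smul c e)))"
    using h by (rule in_J_lmult) simp
  moreover have "in_J (fa_smul c (fa_sub (fa_mult (x i) e) (x i)))"
    using x_mult_e by (intro in_J_smul in_J_ideal) auto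
  moreover have "in_J (fa_smul c (g_el th ths ze i))"
    using i by (intro in_J_smul in_J_g_el)
  ultimately have "in_J (fa_add (fa_mult (fa_sub (fa_mult e (x i)) (x i)) W)
        (fa_add (fa_smul (-1) (fa_mult (fa_sub (fa_mult (x i) e) (x i)) W))
        (fa_add (fa_mult (x i) (fa_sub (fa_mult e W) (fa_smul c e)))
        (fa_add (fa_smul c (fa_sub (fa_mult (x i) e) (x i))) (fa_smul c (g_el th ths ze i))))))"
    by (intro in_J_add)
  moreover have "fa_add (fa_mult (fa_sub (fa_mult e (x i)) (x i)) W)
        (fa_add (fa_smul (-1) (fa_mult (fa_sub (fa_mult (x i) e) (x i)) W))
        (fa_add (fa_mult (x i) (fa_sub (fa_mult e W) (fa_smul c e)))
        (fa_add (fa_smul c (fa_sub (fa_mult (x i) e) (x i))) (fa_smul c (g_el th ths ze i)))))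
      = fa_sub (fa_mult e (fa_mult (x i) W)) (fa_smul (c * x_eigenvalue i) e)"
    unfolding g_el_def x_eigenvalue_def[symmetric]
    by (simp only: fa_ring_simps) (simp add: fun_eq_iff fa_pointwise_defs algebra_simps)
  ultimately show ?thesis by simp
qed

lemma e_mult_x_pow_scalar:
  assumes "W \<in> C" "in_J (fa_sub (fa_mult e W) (fa_smul c e))" "1 \<le> i" "i \<le> d"
  shows "in_J (fa_sub (fa_mult e (fa_mult (fa_pow (x i) n) W)) (fa_smul (c * x_eigenvalue i ^ n) e))"
proof (induction n)
  case 0 then show ?case using assms by (simp add: fa_pow_0)
next
  case (Suc n)
  have "in_J (fa_sub (fa_mult e (fa_mult (x i) (fa_mult (fa_pow (x i) n) W)))
      (fa_smul (c * x_eigenvalue i ^ n * x_eigenvalue i) e))"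
    using Suc assms by (intro e_mult_x_scalar) (auto simp: FA_pow)
  then show ?case by (simp add: fa_pow_Suc fa_mult_assoc mult_ac)
qed

lemma e_mult_monomial_scalar:
  "set L \<subseteq> {1..d} \<Longrightarrow>
   \<exists>c. in_J (fa_sub (fa_mult e (fa_prodl (map (\<lambda>i. fa_pow (x i) (f i)) L))) (fa_smul c e))"
proof (induction L)
  case Nil
  have "fa_sub (fa_mult e (fa_prodl [])) (fa_smul 1 e) = fa_zero"
    by (simp add: fa_prodl_def fun_eq_iff fa_pointwise_defs)
  then show ?case using in_J_zero by (metis list.simps(8))
next
  case (Cons i L)
  then obtain c
    where "in_J (fa_sub (fa_mult e (fa_prodl (map (\<lambda>i. fa_pow (x i) (f i)) L))) (fa_smul c e))"
    by auto
  then have "in_J (fa_sub (fa_mult e (fa_mult (fa_pow (x i) (f i)) (fa_prodl (map (\<lambda>i. fa_pow (x i) (f i)) L))))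
      (fa_smul (c * x_eigenvalue i ^ f i) e))"
    using Cons.prems by (intro e_mult_x_pow_scalar FA_prodl) (auto simp: FA_pow)
  then show ?case by (auto simp: fa_prodl_def)
qed

lemma fa_sum_scalar:
  "finite K \<Longrightarrow> (\<And>m. m \<in> K \<Longrightarrow> in_J (fa_sub (F m) (fa_smul (\<kappa> m) e))) \<Longrightarrow>
   in_J (fa_sub (fa_sum (\<lambda>m. fa_smul (a m) (F m)) K) (fa_smul (\<Sum>m\<in>K. a m * \<kappa> m) e))"
proof (induction K rule: finite_induct)
  case empty
  have "fa_sub (fa_sum (\<lambda>m. fa_smul (a m) (F m)) {}) (fa_smul (\<Sum>m\<in>{}. a m * \<kappa> m) e) = fa_zero"
    by (simp add: fun_eq_iff fa_pointwise_defs fa_sum_def)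
  then show ?case using in_J_zero by simp
next
  case (insert k K)
  have "in_J (fa_add (fa_smul (a k) (fa_sub (F k) (fa_smul (\<kappa> k) e)))
      (fa_sub (fa_sum (\<lambda>m. fa_smul (a m) (F m)) K) (fa_smul (\<Sum>m\<in>K. a m * \<kappa> m) e)))"
    using insert by (intro in_J_add in_J_smul) auto
  moreover have "fa_add (fa_smul (a k) (fa_sub (F k) (fa_smul (\<kappa> k) e)))
      (fa_sub (fa_sum (\<lambda>m. fa_smul (a m) (F m)) K) (fa_smul (\<Sum>m\<in>K. a m * \<kappa> m) e))
     = fa_sub (fa_sum (\<lambda>m. fa_smul (a m) (F m)) (insert k K)) (fa_smul (\<Sum>m\<in>insert k K. a m * \<kappa> m) e)"
    using insert by (simp add: fun_eq_iff fa_pointwise_defs fa_sum_def algebra_simps)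
  ultimately show ?case by simp
qed

lemma mu_mono_scalar: "\<exists>c. in_J (fa_sub (mu_mono d th m) (fa_smul c e))"
  unfolding mu_mono_def by (rule e_mult_monomial_scalar) auto

lemma mu_scalar: "\<exists>c. in_J (fa_sub (mu d th p) (fa_smul c e))"
proof -
  obtain \<kappa> where \<kappa>: "\<And>m. in_J (fa_sub (mu_mono d th m) (fa_smul (\<kappa> m) e))"
    using mu_mono_scalar by metis
  show ?thesis unfolding mu_def by (rule exI, rule fa_sum_scalar[OF _ \<kappa>]) simp
qed

lemma e_mult_scalar:
  assumes mu_surj: "mu_iso d th ths" and t: "t \<in> C"
  obtains c where "in_J (fa_sub (fa_mult e t) (fa_smul c fa_one))"
proof -
  obtain p where p: "fa_sub (fa_mult (fa_mult e t) e) (mu d th p) \<in> I"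
    using assms unfolding mu_iso_def T_ideal_eq by blast
  obtain c where c: "in_J (fa_sub (mu d th p) (fa_smul c e))"
    using mu_scalar by blast
  have "fa_add (fa_sub (mu d th p) (fa_smul c e)) (fa_smul c e) = mu d th p"
    by (simp add: fun_eq_iff fa_pointwise_defs)
  moreover have "fa_add (fa_sub (mu d th p) (fa_smul c e)) (fa_smul c e) \<in> C"
    using c in_J_FA by simp
  ultimately have mu_C: "mu d th p \<in> C" by simp
  have "in_J (fa_add (fa_mult (fa_mult e t) (fa_sub fa_one e))
     (fa_add (fa_sub (fa_mult (fa_mult e t) e) (mu d th p))
     (fa_add (fa_sub (mu d th p) (fa_smul c e)) (fa_smul (-c) (fa_sub fa_one e)))))"
    using c p t mu_C
    by (intro in_J_add[OF in_J_lmult[OF in_J_one_minus_e]] in_J_add[OF in_J_ideal]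
        in_J_add[OF c] in_J_smul[OF in_J_one_minus_e]) auto
  moreover have "fa_add (fa_mult (fa_mult e t) (fa_sub fa_one e))
     (fa_add (fa_sub (fa_mult (fa_mult e t) e) (mu d th p))
     (fa_add (fa_sub (mu d th p) (fa_smul c e)) (fa_smul (-c) (fa_sub fa_one e))))
     = fa_sub (fa_mult e t) (fa_smul c fa_one)"
    by (simp only: fa_ring_simps) (simp add: fun_eq_iff fa_pointwise_defs algebra_simps)
  ultimately show ?thesis by (intro that) simp
qed

lemma proper_submodule_annihilated:
  assumes mu_surj: "mu_iso d th ths" and V: "is_submodule C I J V" and proper: "V \<noteq> mcar C I J"
    and t: "t \<in> C" and tV: "mc t \<in> V"
  shows "mc (fa_mult e t) = mc fa_zero"
proof -
  obtain c where c: "in_J (fa_sub (fa_mult e t) (fa_smul c fa_one))"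
    using e_mult_scalar[OF mu_surj t] .
  then have et: "mc (fa_mult e t) = mc (fa_smul c fa_one)"
    using t by (intro mcls_eqI) auto
  have "qc e \<in> qcar C I" by (auto simp: qcar_iff)
  then have "mact C I J (qc e) (mc t) \<in> V" using V tV unfolding is_submodule_def by blast
  then have "mc (fa_smul c fa_one) \<in> V" using t et by (simp add: mact_mcls)
  then have "c = 0" using submodule_eq_mcar_if_scalar[OF V] proper by blast
  then have "fa_smul c fa_one = (fa_zero :: 'a fa)" by (simp add: fun_eq_iff fa_pointwise_defs)
  then show ?thesis using et by simp
qed

lemma msum_proper:
  assumes mu_surj: "mu_iso d th ths"
    and V: "is_submodule C I J V" "V \<noteq> mcar C I J"
    and W: "is_submodule C I J W" "W \<noteq> mcar C I J"
  shows "msum C I J V W \<noteq> mcar C I J"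
proof
  assume "msum C I J V W = mcar C I J"
  then have "mc fa_one \<in> msum C I J V W" by (auto simp: mcar_iff)
  then obtain x y where xy: "x \<in> C" "y \<in> C" "mc x \<in> V" "mc y \<in> W" "mc fa_one = mc (fa_add x y)"
    by (rule msum_mcls[OF V(1) W(1)])
  have "mc fa_one = mc e"
    using in_J_one_minus_e by (intro mcls_eqI) auto
  also have "\<dots> = mact C I J (qc e) (mc fa_one)"
    by (simp add: mact_mcls)
  also have "\<dots> = madd C I J (mc (fa_mult e x)) (mc (fa_mult e y))"
    using xy by (simp add: mact_mcls madd_mcls fa_ring_simps)
  also have "\<dots> = mc fa_zero"
    using xy proper_submodule_annihilated[OF mu_surj] V W
    by (simp add: madd_mcls) (simp add: fa_add_def fa_zero_def)
  finally have "mc fa_one \<in> V"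
    using V(1) unfolding is_submodule_def mzero_mcls by simp
  then show False
    using submodule_eq_mcar_if_one V by blast
qed

end

theorem lemma9p2:
  fixes d :: nat and th ths ze :: "nat \<Rightarrow> 'k::field"
    and V V' :: "'k fa set set set"
  assumes C1: "cond_C1 d th ths"
    and C2: "cond_C2 d th ths ze"
    and C3: "cond_C3 d th ths"
    and mu_conj: "\<And>d' (th' :: nat \<Rightarrow> 'k) ths'. cond_C1 d' th' ths' \<Longrightarrow> cond_C3 d' th' ths'
                    \<Longrightarrow> mu_iso d' th' ths'"
    and V: "is_submodule (FA d) (T_ideal d th ths) (J_set d th ths ze) V"
    and Vp: "V \<noteq> M_car d th ths ze"
    and V': "is_submodule (FA d) (T_ideal d th ths) (J_set d th ths ze) V'"
    and V'p: "V' \<noteq> M_car d th ths ze"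
  shows "is_submodule (FA d) (T_ideal d th ths) (J_set d th ths ze)
           (msum (FA d) (T_ideal d th ths) (J_set d th ths ze) V V')
       \<and> msum (FA d) (T_ideal d th ths) (J_set d th ths ze) V V' \<noteq> M_car d th ths ze"
proof -
  interpret T_module d th ths ze .
  have mu_surj: "mu_iso d th ths"
    using mu_conj[OF C1 C3] .
  show ?thesis
    using submodule_msum msum_proper[OF mu_surj] V Vp V' V'p
    unfolding J_set_eq T_ideal_eq by blast
qed

end
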